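(* There is a theory $\mathcal{T}$ — for instance the theory whose domain is the integers $\mathbb{Z}$, with integer constants, increment ($x+1$), decrement ($x-1$) and equality — for which the following problem is undecidable: given a TSL($\mathcal{T}$) formula $\phi$ over finite sets $R$ of state variables and $I$ of input variables, decide whether $\phi$ is realizable, i.e. whether there exists a theory Mealy machine realizing $\phi$. In other words, the synthesis problem for TSL modulo theories is undecidable.
   Context: A theory $\mathcal{T}$ consists of a signature (constants, functions, predicates) with a fixed interpretation over a domain $\mathbb{T}$. For a set of variables $V$, $E^{\mathbb{T}}_{\mathcal{T}}(V)$ denotes the terms and $E^{\mathbb{B}}_{\mathcal{T}}(V)$ the formulas of $\mathcal{T}$ with free variables in $V$. Let $R$ be a finite set of state variables and $I$ a finite set of input variables; valuations are $\mathbf{R}=R\to\mathbb{T}$ and $\mathbf{I}=I\to\mathbb{T}$. An update function $\mathbf{u}$ assigns to each $r\in R$ a term $\mathbf{u}(r)\in E^{\mathbb{T}}_{\mathcal{T}}(R\cup I)$; $\mathbf{U}$ is the set of update functions, and $\mathbf{u}[\mathbf{r},\mathbf{i}]\in\mathbf{R}$ is given by $\mathbf{u}[\mathbf{r},\mathbf{i}](r)=$ the value of $\mathbf{u}(r)$ under $\mathbf{r},\mathbf{i}$. TSL($\mathcal{T}$) formulas are generated by: atomic propositions $p\in E^{\mathbb{B}}_{\mathcal{T}}(R\cup I)$; update atoms $[r\leftarrow e]$ with $r\in R$, $e\in E^{\mathbb{T}}_{\mathcal{T}}(R\cup I)$; $\mathrm{true}$, $\mathrm{false}$; $\neg\phi$,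 $\phi\wedge\psi$, $\phi\,\mathbf{U}\,\psi$, $\mathbf{X}\phi$ (with $\mathbf{F}\phi=\mathrm{true}\,\mathbf{U}\,\phi$, $\mathbf{G}\phi=\neg\mathbf{F}\neg\phi$). Semantics over traces $\rho=\rho_0\rho_1\cdots\in(\mathbf{R}\times\mathbf{I})^\omega$, $\rho_j=(\mathbf{r}_j,\mathbf{i}_j)$: $\rho\models p$ iff $(\mathbf{r}_0,\mathbf{i}_0)\models p$; $\rho\models[r\leftarrow e]$ iff $\mathbf{r}_1(r)$ equals the value of $e$ under $(\mathbf{r}_0,\mathbf{i}_0)$; Boolean and temporal operators as in LTL. A theory Mealy machine is $(Q,q_0,P,\mathbf{r}_0,\delta,\mu)$ with finite state set $Q$, initial state $q_0$, finite predicate set $P\subseteq E^{\mathbb{B}}_{\mathcal{T}}(R\cup I)$, initial valuation $\mathbf{r}_0\in\mathbf{R}$, transition function $\delta:Q\times 2^P\to Q$ and update selection $\mu:Q\times2^P\to\mathbf{U}$. For $\mathbf{v}=(\mathbf{r},\mathbf{i})$ let $P_{\mathbf{v}}=\{p\in P\mid \mathbf{v}\models p\}$. The run on input sequence $\mathbf{i}_0\mathbf{i}_1\cdots\in\mathbf{I}^\omega$ is $(q_0,\mathbf{r}_0)(q_1,\mathbf{r}_1)\cdots$ with $q_{k+1}=\delta(q_k,P_{(\mathbf{r}_k,\mathbf{i}_k)})$ and $\mathbf{r}_{k+1}=\mathbf{u}_k[\mathbf{r}_k,\mathbf{i}_k]$ where $\mathbf{u}_k=\mu(q_k,P_{(\mathbf{r}_k,\mathbf{i}_k)})$.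 The machine realizes $\phi$ if for every input sequence the induced trace $(\mathbf{r}_k,\mathbf{i}_k)_k$ satisfies $\phi$. *)

theory Defs
  imports Main "HOL-Library.Nat_Bijection"
begin

text \<open>Terms over state variables (RVar r) and input variables (IVar i);
  the two namespaces are disjoint.\<close>
datatype tm = RVar nat | IVar nat | Cst int | Inc tm | Dec tm

datatype pf = PTrue | PEq tm tm | PNot pf | PAnd pf pf

type_synonym val = "nat \<Rightarrow> int"

primrec teval :: "val \<Rightarrow> val \<Rightarrow> tm \<Rightarrow> int" where
  "teval r i (RVar x) = r x"
| "teval r i (IVar x) = i x"
| "teval r i (Cst c) = c"
| "teval r i (Inc t) = teval r i t + 1"
| "teval r i (Dec t) = teval r i t - 1"

primrec peval :: "val \<Rightarrow> val \<Rightarrow> pf \<Rightarrow> bool" where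
  "peval r i PTrue = True"
| "peval r i (PEq s t) = (teval r i s = teval r i t)"
| "peval r i (PNot p) = (\<not> peval r i p)"
| "peval r i (PAnd p q) = (peval r i p \<and> peval r i q)"

primrec tm_over :: "nat set \<Rightarrow> nat set \<Rightarrow> tm \<Rightarrow> bool" where
  "tm_over R I (RVar x) = (x \<in> R)"
| "tm_over R I (IVar x) = (x \<in> I)"
| "tm_over R I (Cst c) = True"
| "tm_over R I (Inc t) = tm_over R I t"
| "tm_over R I (Dec t) = tm_over R I t"

primrec pf_over :: "nat set \<Rightarrow> nat set \<Rightarrow> pf \<Rightarrow> bool" where
  "pf_over R I PTrue = True"
| "pf_over R I (PEq s t) = (tm_over R I s \<and> tm_over R I t)"
| "pf_over R I (PNot p) = pf_over R I p"
| "pf_over R I (PAnd p q) = (pf_over R I p \<and> pf_over R I q)"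

datatype tsl = Atom pf | Upd nat tm | TT | FF | Neg tsl | Conj tsl tsl
  | Until tsl tsl | Next tsl

primrec tsl_over :: "nat set \<Rightarrow> nat set \<Rightarrow> tsl \<Rightarrow> bool" where
  "tsl_over R I (Atom p) = pf_over R I p"
| "tsl_over R I (Upd r e) = (r \<in> R \<and> tm_over R I e)"
| "tsl_over R I TT = True"
| "tsl_over R I FF = True"
| "tsl_over R I (Neg f) = tsl_over R I f"
| "tsl_over R I (Conj f g) = (tsl_over R I f \<and> tsl_over R I g)"
| "tsl_over R I (Until f g) = (tsl_over R I f \<and> tsl_over R I g)"
| "tsl_over R I (Next f) = tsl_over R I f"

primrec sat :: "(nat \<Rightarrow> val \<times> val) \<Rightarrow> nat \<Rightarrow> tsl \<Rightarrow> bool" where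
  "sat \<rho> j (Atom p) = peval (fst (\<rho> j)) (snd (\<rho> j)) p"
| "sat \<rho> j (Upd r e) = (fst (\<rho> (Suc j)) r = teval (fst (\<rho> j)) (snd (\<rho> j)) e)"
| "sat \<rho> j TT = True"
| "sat \<rho> j FF = False"
| "sat \<rho> j (Neg f) = (\<not> sat \<rho> j f)"
| "sat \<rho> j (Conj f g) = (sat \<rho> j f \<and> sat \<rho> j g)"
| "sat \<rho> j (Until f g) = (\<exists>k\<ge>j. sat \<rho> k g \<and> (\<forall>m. j \<le> m \<and> m < k \<longrightarrow> sat \<rho> m f))"
| "sat \<rho> j (Next f) = sat \<rho> (Suc j) f"

primrec mrun :: "nat \<Rightarrow> pf set \<Rightarrow> val \<Rightarrow> (nat \<Rightarrow> pf set \<Rightarrow> nat)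
    \<Rightarrow> (nat \<Rightarrow> pf set \<Rightarrow> (nat \<Rightarrow> tm)) \<Rightarrow> (nat \<Rightarrow> val) \<Rightarrow> nat \<Rightarrow> nat \<times> val" where
  "mrun q0 P r0 \<delta> \<mu> ins 0 = (q0, r0)"
| "mrun q0 P r0 \<delta> \<mu> ins (Suc k) =
     (let q = fst (mrun q0 P r0 \<delta> \<mu> ins k);
          r = snd (mrun q0 P r0 \<delta> \<mu> ins k);
          S = {p \<in> P. peval r (ins k) p}
      in (\<delta> q S, \<lambda>x. teval r (ins k) (\<mu> q S x)))"

definition is_mealy ::
  "nat set \<Rightarrow> nat set \<Rightarrow> nat set \<Rightarrow> nat \<Rightarrow> pf set \<Rightarrow> val
    \<Rightarrow> (nat \<Rightarrow> pf set \<Rightarrow> nat) \<Rightarrow> (nat \<Rightarrow> pf set \<Rightarrow> (nat \<Rightarrow> tm)) \<Rightarrow> bool" where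
  "is_mealy R I Q q0 P r0 \<delta> \<mu> \<longleftrightarrow>
     finite Q \<and> q0 \<in> Q \<and> finite P \<and> (\<forall>p\<in>P. pf_over R I p) \<and>
     (\<forall>q\<in>Q. \<forall>S. S \<subseteq> P \<longrightarrow> \<delta> q S \<in> Q \<and> (\<forall>r\<in>R. tm_over R I (\<mu> q S r)))"

definition realizes ::
  "nat \<Rightarrow> pf set \<Rightarrow> val \<Rightarrow> (nat \<Rightarrow> pf set \<Rightarrow> nat) \<Rightarrow> (nat \<Rightarrow> pf set \<Rightarrow> (nat \<Rightarrow> tm))
    \<Rightarrow> tsl \<Rightarrow> bool" where
  "realizes q0 P r0 \<delta> \<mu> \<phi> \<longleftrightarrow>
     (\<forall>ins. sat (\<lambda>k. (snd (mrun q0 P r0 \<delta> \<mu> ins k), ins k)) 0 \<phi>)"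

definition realizable :: "nat set \<Rightarrow> nat set \<Rightarrow> tsl \<Rightarrow> bool" where
  "realizable R I \<phi> \<longleftrightarrow>
     (\<exists>Q q0 P r0 \<delta> \<mu>. is_mealy R I Q q0 P r0 \<delta> \<mu> \<and> realizes q0 P r0 \<delta> \<mu> \<phi>)"

primrec enc_tm :: "tm \<Rightarrow> nat" where
  "enc_tm (RVar x) = prod_encode (0, x)"
| "enc_tm (IVar x) = prod_encode (1, x)"
| "enc_tm (Cst c) = prod_encode (2, int_encode c)"
| "enc_tm (Inc t) = prod_encode (3, enc_tm t)"
| "enc_tm (Dec t) = prod_encode (4, enc_tm t)"

primrec enc_pf :: "pf \<Rightarrow> nat" where
  "enc_pf PTrue = prod_encode (0, 0)"
| "enc_pf (PEq s t) = prod_encode (1, prod_encode (enc_tm s, enc_tm t))"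
| "enc_pf (PNot p) = prod_encode (2, enc_pf p)"
| "enc_pf (PAnd p q) = prod_encode (3, prod_encode (enc_pf p, enc_pf q))"

primrec enc_tsl :: "tsl \<Rightarrow> nat" where
  "enc_tsl (Atom p) = prod_encode (0, enc_pf p)"
| "enc_tsl (Upd r e) = prod_encode (1, prod_encode (r, enc_tm e))"
| "enc_tsl TT = prod_encode (2, 0)"
| "enc_tsl FF = prod_encode (3, 0)"
| "enc_tsl (Neg f) = prod_encode (4, enc_tsl f)"
| "enc_tsl (Conj f g) = prod_encode (5, prod_encode (enc_tsl f, enc_tsl g))"
| "enc_tsl (Until f g) = prod_encode (6, prod_encode (enc_tsl f, enc_tsl g))"
| "enc_tsl (Next f) = prod_encode (7, enc_tsl f)"

definition enc_instance :: "nat list \<Rightarrow> nat list \<Rightarrow> tsl \<Rightarrow> nat" where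
  "enc_instance Rs Is \<phi> = prod_encode (list_encode Rs, prod_encode (list_encode Is, enc_tsl \<phi>))"

datatype recf = Zf | Sf | Proj nat | Comp recf "recf list" | PrimRec recf recf | Minim recf

inductive rec_eval :: "recf \<Rightarrow> nat list \<Rightarrow> nat \<Rightarrow> bool" where
  zero: "rec_eval Zf xs 0"
| succ: "rec_eval Sf (x # xs) (Suc x)"
| proj: "i < length xs \<Longrightarrow> rec_eval (Proj i) xs (xs ! i)"
| comp: "list_all2 (\<lambda>g y. rec_eval g xs y) gs ys \<Longrightarrow> rec_eval f ys z
          \<Longrightarrow> rec_eval (Comp f gs) xs z"
| prim0: "rec_eval f xs y \<Longrightarrow> rec_eval (PrimRec f g) (0 # xs) y"
| primS: "rec_eval (PrimRec f g) (n # xs) y \<Longrightarrow> rec_eval g (n # y # xs) z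
          \<Longrightarrow> rec_eval (PrimRec f g) (Suc n # xs) z"
| minim: "rec_eval f (n # xs) 0 \<Longrightarrow> (\<forall>m<n. \<exists>y. y \<noteq> 0 \<and> rec_eval f (m # xs) y)
          \<Longrightarrow> rec_eval (Minim f) xs n"

definition tsl_realizability_decidable :: bool where
  "tsl_realizability_decidable \<longleftrightarrow>
     (\<exists>f. \<forall>Rs Is \<phi>. tsl_over (set Rs) (set Is) \<phi> \<longrightarrow>
        rec_eval f [enc_instance Rs Is \<phi>] (if realizable (set Rs) (set Is) \<phi> then 1 else 0))"

end

(*
  A counter machine P with N registers is described by a TSL formula without inputs over the
  state variables 0..N (program counter and registers): the registers start from the machine's
  input, every step performs the instruction the program counter points to, and eventually the
  program counter reaches the halting label. Every trace satisfying the formula follows the run of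
  the machine, and the one-state Mealy machine that executes P produces such a trace, so the
  formula is realizable iff P halts.

  Undecidability follows by diagonalisation. Partial recursive functions compile to counter
  machines. For a purported decider f, consider the machine that on input x computes the code of
  the instance "register 0 starts at x, and then the rest of the formula is the one coded by x",
  runs f on it, and halts iff f answers 0. On x = the code of its own specification, the machine
  halts iff its own halting formula is unrealizable, i.e. iff it does not halt.
*)

theory Submission
  imports Defs
begin

section \<open>Counter machines\<close>

type_synonym config = "nat \<times> (nat \<Rightarrow> nat)"

datatype instr = IInc nat nat | IDec nat nat | IJz nat nat nat

fun instr_reg :: "instr \<Rightarrow> nat" where
  "instr_reg (IInc r j) = r"
| "instr_reg (IDec r j) = r"
| "instr_reg (IJz r j\<^sub>1 j\<^sub>2) = r"

text \<open>The Boolean argument tells whether the register read by the instruction is zero.\<close>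
fun instr_next :: "instr \<Rightarrow> bool \<Rightarrow> nat" where
  "instr_next (IInc r j) z = j"
| "instr_next (IDec r j) z = j"
| "instr_next (IJz r j\<^sub>1 j\<^sub>2) z = (if z then j\<^sub>1 else j\<^sub>2)"

fun instr_update :: "instr \<Rightarrow> nat \<Rightarrow> nat" where
  "instr_update (IInc r j) x = Suc x"
| "instr_update (IDec r j) x = x - 1"
| "instr_update (IJz r j\<^sub>1 j\<^sub>2) x = x"

definition step :: "instr list \<Rightarrow> config \<Rightarrow> config" where
  "step P c = (if fst c < length P then
     (let i = P ! fst c; s = snd c
      in (instr_next i (s (instr_reg i) = 0), s(instr_reg i := instr_update i (s (instr_reg i)))))
     else c)"

definition halts :: "instr list \<Rightarrow> (nat \<Rightarrow> nat) \<Rightarrow> bool" where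
  "halts P s \<longleftrightarrow> (\<exists>n. fst ((step P ^^ n) (0, s)) = length P)"

definition wf_prog :: "nat \<Rightarrow> instr list \<Rightarrow> bool" where
  "wf_prog N P \<longleftrightarrow> (\<forall>i\<in>set P. instr_reg i < N \<and> (\<forall>z. instr_next i z \<le> length P))"

lemma step_lt:
  assumes "fst c < length P"
  shows "step P c = (let i = P ! fst c; x = snd c (instr_reg i)
                     in (instr_next i (x = 0), (snd c)(instr_reg i := instr_update i x)))"
  using assms by (simp add: step_def Let_def)

lemma step_ge: "\<not> fst c < length P \<Longrightarrow> step P c = c"
  by (simp add: step_def)

lemma funpow_step_halted: "\<not> fst c < length P \<Longrightarrow> (step P ^^ n) c = c"
  by (induction n) (simp_all add: step_ge)

lemma funpow_step_pc_le:
  assumes "wf_prog N P" "fst c \<le> length P"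
  shows "fst ((step P ^^ n) c) \<le> length P"
proof (induction n)
  case (Suc n)
  define c' where "c' = (step P ^^ n) c"
  have "fst (step P c') \<le> length P"
  proof (cases "fst c' < length P")
    case True
    then have "P ! fst c' \<in> set P" by simp
    with True assms(1) show ?thesis by (simp add: step_lt wf_prog_def Let_def)
  qed (use Suc.IH c'_def in \<open>simp add: step_ge\<close>)
  then show ?case by (simp add: c'_def)
qed (simp add: assms(2))

lemma halts_iff_halts_from:
  assumes reach: "(step P ^^ n) (0, s) = c" and running: "fst c < length P"
  shows "halts P s \<longleftrightarrow> (\<exists>k. fst ((step P ^^ k) c) = length P)"
proof
  assume "halts P s"
  then obtain k where k: "fst ((step P ^^ k) (0, s)) = length P" unfolding halts_def by blast
  show "\<exists>k. fst ((step P ^^ k) c) = length P"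
  proof (cases "k \<le> n")
    case True
    define d where "d = n - k"
    with True have "n = d + k" by simp
    then have "c = (step P ^^ d) ((step P ^^ k) (0, s))" using reach by (simp add: funpow_add)
    also have "\<dots> = (step P ^^ k) (0, s)" by (rule funpow_step_halted) (simp add: k)
    finally show ?thesis using running k by simp
  next
    case False
    define d where "d = k - n"
    with False have "k = d + n" by simp
    then have "(step P ^^ k) (0, s) = (step P ^^ d) c" using reach by (simp add: funpow_add)
    with k show ?thesis by auto
  qed
next
  assume "\<exists>k. fst ((step P ^^ k) c) = length P"
  then obtain k where "fst ((step P ^^ k) c) = length P" by blast
  moreover have "(step P ^^ (k + n)) (0, s) = (step P ^^ k) c" using reach by (simp add: funpow_add)
  ultimately have "fst ((step P ^^ (k + n)) (0, s)) = length P" by simp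
  then show "halts P s" unfolding halts_def by blast
qed

section \<open>Structured programs and their compilation\<close>

datatype cmd = CInc nat | CDec nat | CSeq cmd cmd | CWhile nat cmd

inductive exec :: "cmd \<Rightarrow> (nat \<Rightarrow> nat) \<Rightarrow> (nat \<Rightarrow> nat) \<Rightarrow> bool" where
  exec_Inc: "exec (CInc r) s (s(r := Suc (s r)))"
| exec_Dec: "exec (CDec r) s (s(r := s r - 1))"
| exec_Seq: "exec c\<^sub>1 s s\<^sub>1 \<Longrightarrow> exec c\<^sub>2 s\<^sub>1 s\<^sub>2 \<Longrightarrow> exec (CSeq c\<^sub>1 c\<^sub>2) s s\<^sub>2"
| exec_While_False: "s r = 0 \<Longrightarrow> exec (CWhile r c) s s"
| exec_While_True: "s r \<noteq> 0 \<Longrightarrow> exec c s s\<^sub>1 \<Longrightarrow> exec (CWhile r c) s\<^sub>1 s\<^sub>2 \<Longrightarrow> exec (CWhile r c) s s\<^sub>2"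

lemma exec_final_cong: "exec c s s' \<Longrightarrow> s' = s'' \<Longrightarrow> exec c s s''"
  by simp

fun code_length :: "cmd \<Rightarrow> nat" where
  "code_length (CInc r) = 1"
| "code_length (CDec r) = 1"
| "code_length (CSeq c\<^sub>1 c\<^sub>2) = code_length c\<^sub>1 + code_length c\<^sub>2"
| "code_length (CWhile r c) = code_length c + 2"


fun compile :: "cmd \<Rightarrow> nat \<Rightarrow> instr list" where
  "compile (CInc r) k = [IInc r (k + 1)]"
| "compile (CDec r) k = [IDec r (k + 1)]"
| "compile (CSeq c\<^sub>1 c\<^sub>2) k = compile c\<^sub>1 k @ compile c\<^sub>2 (k + code_length c\<^sub>1)"
| "compile (CWhile r c) k =
     IJz r (k + code_length c + 2) (k + 1) # compile c (k + 1) @ [IJz r k k]"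

lemma length_compile [simp]: "length (compile c k) = code_length c"
  by (induction c arbitrary: k) auto

definition code_at :: "instr list \<Rightarrow> nat \<Rightarrow> cmd \<Rightarrow> bool" where
  "code_at P k c \<longleftrightarrow> (\<exists>xs ys. P = xs @ compile c k @ ys \<and> length xs = k)"

lemma code_at_Seq:
  assumes "code_at P k (CSeq c\<^sub>1 c\<^sub>2)"
  shows "code_at P k c\<^sub>1" "code_at P (k + code_length c\<^sub>1) c\<^sub>2"
proof -
  from assms obtain xs ys where
    P: "P = xs @ compile c\<^sub>1 k @ compile c\<^sub>2 (k + code_length c\<^sub>1) @ ys" and xs: "length xs = k"
    unfolding code_at_def by auto
  show "code_at P k c\<^sub>1"
    unfolding code_at_def using P xs by blast
  show "code_at P (k + code_length c\<^sub>1) c\<^sub>2"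
    unfolding code_at_def using P xs by (intro exI[of _ "xs @ compile c\<^sub>1 k"] exI[of _ ys]) simp
qed

lemma code_at_While:
  assumes "code_at P k (CWhile r c)"
  shows "code_at P (k + 1) c" "P ! k = IJz r (k + code_length c + 2) (k + 1)"
    "P ! (k + 1 + code_length c) = IJz r k k" "k + code_length c + 2 \<le> length P"
proof -
  from assms obtain xs ys where
    P: "P = xs @ IJz r (k + code_length c + 2) (k + 1) # compile c (k + 1) @ IJz r k k # ys"
    and xs: "length xs = k"
    unfolding code_at_def by auto
  show "code_at P (k + 1) c"
    unfolding code_at_def using P xs
    by (intro exI[of _ "xs @ [IJz r (k + code_length c + 2) (k + 1)]"] exI[of _ "IJz r k k # ys"]) auto
  show "P ! k = IJz r (k + code_length c + 2) (k + 1)"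
    using P xs by (simp add: nth_append)
  show "P ! (k + 1 + code_length c) = IJz r k k"
    using P xs by (simp add: nth_append)
  show "k + code_length c + 2 \<le> length P"
    using P xs by simp
qed

lemma code_at_single:
  assumes "code_at P k c" "compile c k = [i]"
  shows "k < length P" "P ! k = i"
  using assms unfolding code_at_def by (auto simp: nth_append)

theorem compile_correct:
  "exec c s s' \<Longrightarrow> code_at P k c \<Longrightarrow> \<exists>n. (step P ^^ n) (k, s) = (k + code_length c, s')"
proof (induction arbitrary: k rule: exec.induct)
  case (exec_Inc r s)
  then have "k < length P" "P ! k = IInc r (k + 1)" by (auto intro: code_at_single)
  then show ?case by (intro exI[of _ 1]) (auto simp: step_def fun_eq_iff)
next
  case (exec_Dec r s)
  then have "k < length P" "P ! k = IDec r (k + 1)" by (auto intro: code_at_single)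
  then show ?case by (intro exI[of _ 1]) (auto simp: step_def fun_eq_iff)
next
  case (exec_Seq c\<^sub>1 s s\<^sub>1 c\<^sub>2 s\<^sub>2)
  from code_at_Seq[OF exec_Seq.prems] exec_Seq.IH obtain n\<^sub>1 n\<^sub>2 where
    "(step P ^^ n\<^sub>1) (k, s) = (k + code_length c\<^sub>1, s\<^sub>1)"
    "(step P ^^ n\<^sub>2) (k + code_length c\<^sub>1, s\<^sub>1) = (k + code_length c\<^sub>1 + code_length c\<^sub>2, s\<^sub>2)"
    by blast
  then show ?case by (intro exI[of _ "n\<^sub>2 + n\<^sub>1"]) (simp add: funpow_add add.assoc)
next
  case (exec_While_False s r c)
  from code_at_While[OF exec_While_False.prems] exec_While_False.hyps show ?case
    by (intro exI[of _ 1]) (auto simp: step_def fun_eq_iff)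
next
  case (exec_While_True s r c s\<^sub>1 s\<^sub>2)
  note code = code_at_While[OF exec_While_True.prems]
  have enter: "step P (k, s) = (k + 1, s)"
    using code exec_While_True.hyps(1) by (simp add: step_def)
  obtain n\<^sub>1 where body: "(step P ^^ n\<^sub>1) (k + 1, s) = (k + 1 + code_length c, s\<^sub>1)"
    using code exec_While_True.IH(1) by blast
  have loop_back: "step P (k + 1 + code_length c, s\<^sub>1) = (k, s\<^sub>1)"
    using code by (simp add: step_def)
  obtain n\<^sub>2 where rest: "(step P ^^ n\<^sub>2) (k, s\<^sub>1) = (k + code_length (CWhile r c), s\<^sub>2)"
    using exec_While_True.IH(2)[OF exec_While_True.prems] by blast
  have "(step P ^^ (n\<^sub>2 + 1 + n\<^sub>1 + 1)) (k, s) = (step P ^^ n\<^sub>2) (step P ((step P ^^ n\<^sub>1) (step P (k, s))))"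
    by (simp only: funpow_add funpow.simps One_nat_def comp_apply id_apply)
  also have "\<dots> = (k + code_length (CWhile r c), s\<^sub>2)"
    by (simp only: enter body loop_back rest)
  finally show ?case by (rule exI)
qed

definition skip :: cmd where
  "skip = CSeq (CInc 0) (CDec 0)"

lemma exec_skip: "exec skip s s"
  unfolding skip_def by (rule exec_Seq[OF exec_Inc exec_final_cong[OF exec_Dec]]) simp

primrec bump :: "nat list \<Rightarrow> cmd" where
  "bump [] = skip"
| "bump (r # rs) = CSeq (CInc r) (bump rs)"

lemma exec_bump: "exec (bump rs) s (\<lambda>r. s r + count_list rs r)"
proof (induction rs arbitrary: s)
  case Nil
  show ?case using exec_skip by simp
next
  case (Cons r rs)
  show ?case
    unfolding bump.simps by (rule exec_Seq[OF exec_Inc exec_final_cong[OF Cons.IH]]) auto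
qed

definition transfer :: "nat \<Rightarrow> nat list \<Rightarrow> cmd" where
  "transfer a rs = CWhile a (CSeq (CDec a) (bump rs))"

lemma exec_transfer:
  assumes "a \<notin> set rs"
  shows "exec (transfer a rs) s (\<lambda>r. if r = a then 0 else s r + s a * count_list rs r)"
proof (induction "s a" arbitrary: s)
  case 0
  then have "(\<lambda>r. if r = a then 0 else s r + s a * count_list rs r) = s" by auto
  with 0 show ?case unfolding transfer_def by (simp add: exec_While_False)
next
  case (Suc n)
  define s\<^sub>1 where "s\<^sub>1 r = (s(a := n)) r + count_list rs r" for r
  have body: "exec (CSeq (CDec a) (bump rs)) s s\<^sub>1"
    unfolding s\<^sub>1_def using Suc.hyps(2)[symmetric]
    by (intro exec_Seq[OF exec_Dec exec_final_cong[OF exec_bump]]) (simp add: fun_eq_iff)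
  have "s\<^sub>1 a = n" using assms by (simp add: s\<^sub>1_def)
  then have "exec (transfer a rs) s\<^sub>1 (\<lambda>r. if r = a then 0 else s\<^sub>1 r + s\<^sub>1 a * count_list rs r)"
    using Suc.hyps(1)[of s\<^sub>1] by simp
  also have "(\<lambda>r. if r = a then 0 else s\<^sub>1 r + s\<^sub>1 a * count_list rs r)
           = (\<lambda>r. if r = a then 0 else s r + s a * count_list rs r)"
    using Suc.hyps(2)[symmetric] assms by (simp add: s\<^sub>1_def fun_eq_iff)
  finally have "exec (CWhile a (CSeq (CDec a) (bump rs))) s\<^sub>1
                  (\<lambda>r. if r = a then 0 else s r + s a * count_list rs r)"
    unfolding transfer_def .
  with body Suc.hyps(2) show ?case
    unfolding transfer_def by (metis exec_While_True nat.distinct(1))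
qed

definition clear :: "nat \<Rightarrow> cmd" where
  "clear r = transfer r []"

lemma exec_clear: "exec (clear r) s (s(r := 0))"
  unfolding clear_def by (rule exec_final_cong[OF exec_transfer]) auto

definition add_to :: "nat \<Rightarrow> nat \<Rightarrow> nat \<Rightarrow> cmd" where
  "add_to a b t = CSeq (clear t) (CSeq (transfer a [b, t]) (transfer t [a]))"

lemma exec_add_to:
  assumes "distinct [a, b, t]"
  shows "exec (add_to a b t) s (s(b := s b + s a, t := 0))"
  unfolding add_to_def
  using assms
  by (intro exec_Seq[OF exec_clear] exec_Seq[OF exec_transfer] exec_final_cong[OF exec_transfer])
     (auto simp: fun_eq_iff)

definition copy :: "nat \<Rightarrow> nat \<Rightarrow> nat \<Rightarrow> cmd" where
  "copy a b t = CSeq (clear b) (add_to a b t)"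

lemma exec_copy:
  assumes "distinct [a, b, t]"
  shows "exec (copy a b t) s (s(b := s a, t := 0))"
  unfolding copy_def using assms
  by (intro exec_Seq[OF exec_clear] exec_final_cong[OF exec_add_to]) (auto simp: fun_eq_iff)

definition set_const :: "nat \<Rightarrow> nat \<Rightarrow> cmd" where
  "set_const r k = CSeq (clear r) (bump (replicate k r))"

lemma count_list_replicate: "count_list (replicate k x) y = (if x = y then k else 0)"
  by (induction k) auto

lemma exec_set_const: "exec (set_const r k) s (s(r := k))"
  unfolding set_const_def
  by (rule exec_Seq[OF exec_clear exec_final_cong[OF exec_bump]])
     (simp add: fun_eq_iff count_list_replicate)

definition triangle_loop :: "nat \<Rightarrow> nat \<Rightarrow> nat \<Rightarrow> cmd" where
  "triangle_loop a d t = CWhile a (CSeq (add_to a d t) (CDec a))"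

lemma exec_triangle_loop:
  assumes "distinct [a, d, t]"
  shows "\<exists>s'. exec (triangle_loop a d t) s s' \<and> s' d = s d + triangle (s a)
           \<and> (\<forall>r. r \<notin> {a, d, t} \<longrightarrow> s' r = s r)"
proof (induction "s a" arbitrary: s)
  case 0
  then show ?case unfolding triangle_loop_def by (auto intro: exec_While_False)
next
  case (Suc n)
  let ?s\<^sub>1 = "s(d := s d + Suc n, t := 0, a := n)"
  have body: "exec (CSeq (add_to a d t) (CDec a)) s ?s\<^sub>1"
    using assms Suc.hyps(2)
    by (intro exec_Seq[OF exec_add_to] exec_final_cong[OF exec_Dec]) (auto simp: fun_eq_iff)
  obtain s' where s': "exec (triangle_loop a d t) ?s\<^sub>1 s'" "s' d = ?s\<^sub>1 d + triangle (?s\<^sub>1 a)"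
    "\<forall>r. r \<notin> {a, d, t} \<longrightarrow> s' r = ?s\<^sub>1 r"
    using Suc.hyps(1)[of ?s\<^sub>1] by auto
  have "exec (triangle_loop a d t) s s'"
    unfolding triangle_loop_def
    by (rule exec_While_True[OF _ body s'(1)[unfolded triangle_loop_def]]) (use Suc.hyps(2) in simp)
  moreover have "s' d = s d + triangle (s a)"
    using s'(2) assms Suc.hyps(2)[symmetric] by simp
  ultimately show ?case using s'(3) assms by auto
qed

text \<open>Computes the Cantor pairing \<open>prod_encode (x, y) = triangle (x + y) + x\<close>.\<close>
definition pair :: "nat \<Rightarrow> nat \<Rightarrow> nat \<Rightarrow> nat \<Rightarrow> nat \<Rightarrow> cmd" where
  "pair a b d t\<^sub>1 t\<^sub>2 =
     CSeq (CSeq (clear t\<^sub>1) (CSeq (add_to a t\<^sub>1 t\<^sub>2) (CSeq (add_to b t\<^sub>1 t\<^sub>2) (clear d))))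
          (CSeq (triangle_loop t\<^sub>1 d t\<^sub>2) (add_to a d t\<^sub>2))"

lemma exec_pair:
  assumes "distinct [a, b, d, t\<^sub>1, t\<^sub>2]"
  shows "\<exists>s'. exec (pair a b d t\<^sub>1 t\<^sub>2) s s' \<and> s' d = prod_encode (s a, s b)
           \<and> (\<forall>r. r \<notin> {d, t\<^sub>1, t\<^sub>2} \<longrightarrow> s' r = s r)"
proof -
  let ?s\<^sub>1 = "s(t\<^sub>1 := s a + s b, t\<^sub>2 := 0, d := 0)"
  have prefix: "exec (CSeq (clear t\<^sub>1) (CSeq (add_to a t\<^sub>1 t\<^sub>2) (CSeq (add_to b t\<^sub>1 t\<^sub>2) (clear d)))) s ?s\<^sub>1"
    using assms
    by (intro exec_Seq[OF exec_clear] exec_Seq[OF exec_add_to] exec_final_cong[OF exec_clear])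
       (auto simp: fun_eq_iff)
  obtain s\<^sub>2 where s\<^sub>2: "exec (triangle_loop t\<^sub>1 d t\<^sub>2) ?s\<^sub>1 s\<^sub>2" "s\<^sub>2 d = triangle (s a + s b)"
    "\<forall>r. r \<notin> {t\<^sub>1, d, t\<^sub>2} \<longrightarrow> s\<^sub>2 r = ?s\<^sub>1 r"
    using exec_triangle_loop[of t\<^sub>1 d t\<^sub>2 ?s\<^sub>1] assms by auto
  have "exec (pair a b d t\<^sub>1 t\<^sub>2) s (s\<^sub>2(d := s\<^sub>2 d + s\<^sub>2 a, t\<^sub>2 := 0))"
    unfolding pair_def using assms by (intro exec_Seq[OF prefix] exec_Seq[OF s\<^sub>2(1)] exec_add_to) auto
  then show ?thesis
    using s\<^sub>2 assms by (intro exI) (auto simp: prod_encode_def)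
qed

section \<open>Compiling partial recursive functions\<close>

definition primrec_loop :: "cmd \<Rightarrow> nat \<Rightarrow> cmd" where
  "primrec_loop body fr = CWhile (fr + 2)
     (CSeq body (CSeq (copy (fr + 3) fr (fr + 4)) (CSeq (CInc (fr + 1)) (CDec (fr + 2)))))"

definition search_loop :: "cmd \<Rightarrow> nat \<Rightarrow> cmd" where
  "search_loop body fr = CWhile (fr + 1) (CSeq (CInc fr) body)"

text \<open>The arguments are read from the registers \<open>ins\<close>, the result is written to \<open>out\<close>,
  and the registers from \<open>fr\<close> on are scratch space. Primitive recursion keeps the current value
  in \<open>fr\<close>, the counter in \<open>fr + 1\<close> and the remaining iterations in \<open>fr + 2\<close>; minimisation keeps
  the candidate in \<open>fr\<close> and the value of the searched function in \<open>fr + 1\<close>.\<close>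
fun compile_recf :: "recf \<Rightarrow> nat list \<Rightarrow> nat \<Rightarrow> nat \<Rightarrow> cmd"
and compile_recfs :: "recf list \<Rightarrow> nat list \<Rightarrow> nat \<Rightarrow> nat \<Rightarrow> cmd" where
  "compile_recf Zf ins out fr = clear out"
| "compile_recf Sf ins out fr = CSeq (copy (hd ins) out fr) (CInc out)"
| "compile_recf (Proj i) ins out fr = copy (ins ! i) out fr"
| "compile_recf (Comp f gs) ins out fr =
     CSeq (compile_recfs gs ins fr (fr + length gs))
          (compile_recf f [fr..<fr + length gs] out (fr + length gs))"
| "compile_recf (PrimRec f g) ins out fr =
     CSeq (compile_recf f (tl ins) fr (fr + 5))
     (CSeq (clear (fr + 1))
     (CSeq (copy (hd ins) (fr + 2) (fr + 4))
     (CSeq (primrec_loop (compile_recf g ((fr + 1) # fr # tl ins) (fr + 3) (fr + 5)) fr)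
           (copy fr out (fr + 4)))))"
| "compile_recf (Minim f) ins out fr =
     CSeq (clear fr)
     (CSeq (compile_recf f (fr # ins) (fr + 1) (fr + 3))
     (CSeq (search_loop (compile_recf f (fr # ins) (fr + 1) (fr + 3)) fr)
           (copy fr out (fr + 2))))"
| "compile_recfs [] ins y fr = skip"
| "compile_recfs (g # gs) ins y fr = CSeq (compile_recf g ins y fr) (compile_recfs gs ins (Suc y) fr)"

definition recf_compiled :: "recf \<Rightarrow> bool" where
  "recf_compiled f \<longleftrightarrow> (\<forall>xs y ins out fr s. rec_eval f xs y \<longrightarrow> map s ins = xs \<longrightarrow>
     set ins \<subseteq> {..<fr} \<longrightarrow> out < fr \<longrightarrow> out \<notin> set ins \<longrightarrow>
     (\<exists>s'. exec (compile_recf f ins out fr) s s' \<and> s' out = y \<and> (\<forall>r<fr. r \<noteq> out \<longrightarrow> s' r = s r)))"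

lemma recf_compiledI:
  assumes "\<And>xs y ins out fr s. rec_eval f xs y \<Longrightarrow> map s ins = xs \<Longrightarrow>
     set ins \<subseteq> {..<fr} \<Longrightarrow> out < fr \<Longrightarrow> out \<notin> set ins \<Longrightarrow>
     \<exists>s'. exec (compile_recf f ins out fr) s s' \<and> s' out = y \<and> (\<forall>r<fr. r \<noteq> out \<longrightarrow> s' r = s r)"
  shows "recf_compiled f"
  using assms unfolding recf_compiled_def by blast

lemma recf_compiledD:
  assumes "recf_compiled f" "rec_eval f xs y" "map s ins = xs"
    "set ins \<subseteq> {..<fr}" "out < fr" "out \<notin> set ins"
  shows "\<exists>s'. exec (compile_recf f ins out fr) s s' \<and> s' out = y \<and> (\<forall>r<fr. r \<noteq> out \<longrightarrow> s' r = s r)"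
  using assms unfolding recf_compiled_def by blast

lemma recf_compiled_Zf: "recf_compiled Zf"
proof (rule recf_compiledI)
  fix xs ins :: "nat list" and y out fr :: nat and s :: "nat \<Rightarrow> nat"
  assume "rec_eval Zf xs y"
  then have "y = 0" by (auto elim: rec_eval.cases)
  with exec_clear[of out s] show "\<exists>s'. exec (compile_recf Zf ins out fr) s s' \<and> s' out = y \<and>
      (\<forall>r<fr. r \<noteq> out \<longrightarrow> s' r = s r)" by auto
qed

lemma recf_compiled_Sf: "recf_compiled Sf"
proof (rule recf_compiledI)
  fix xs ins :: "nat list" and y out fr :: nat and s :: "nat \<Rightarrow> nat"
  assume ev: "rec_eval Sf xs y" and args: "map s ins = xs" "set ins \<subseteq> {..<fr}"
    and out: "out < fr" "out \<notin> set ins"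
  from ev obtain x xs' where "xs = x # xs'" "y = Suc x" by (auto elim: rec_eval.cases)
  with args obtain a ins' where ins: "ins = a # ins'" "s a = x" by (cases ins) auto
  have "distinct [a, out, fr]" using ins args out by auto
  then have "exec (compile_recf Sf ins out fr) s (s(out := s a, fr := 0, out := Suc (s a)))"
    using ins by (auto intro!: exec_Seq[OF exec_copy] exec_final_cong[OF exec_Inc])
  then show "\<exists>s'. exec (compile_recf Sf ins out fr) s s' \<and> s' out = y \<and>
      (\<forall>r<fr. r \<noteq> out \<longrightarrow> s' r = s r)"
    using \<open>y = Suc x\<close> ins by (intro exI) auto
qed

lemma recf_compiled_Proj: "recf_compiled (Proj i)"
proof (rule recf_compiledI)
  fix xs ins :: "nat list" and y out fr :: nat and s :: "nat \<Rightarrow> nat"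
  assume ev: "rec_eval (Proj i) xs y" and args: "map s ins = xs" "set ins \<subseteq> {..<fr}"
    and out: "out < fr" "out \<notin> set ins"
  from ev have i: "i < length xs" "y = xs ! i" by (auto elim: rec_eval.cases)
  then have a: "ins ! i \<in> set ins" "s (ins ! i) = y" using args by auto
  then have "distinct [ins ! i, out, fr]" using args out by auto
  then have "exec (compile_recf (Proj i) ins out fr) s (s(out := s (ins ! i), fr := 0))"
    by (simp add: exec_copy)
  then show "\<exists>s'. exec (compile_recf (Proj i) ins out fr) s s' \<and> s' out = y \<and>
      (\<forall>r<fr. r \<noteq> out \<longrightarrow> s' r = s r)"
    using a out by (intro exI[of _ "s(out := s (ins ! i), fr := 0)"]) auto
qed

lemma exec_compile_recfs:
  assumes "\<forall>g\<in>set gs. recf_compiled g" "list_all2 (\<lambda>g y. rec_eval g xs y) gs ys"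
    "map s ins = xs" "set ins \<subseteq> {..<y\<^sub>0}" "y\<^sub>0 + length gs \<le> fr"
  shows "\<exists>s'. exec (compile_recfs gs ins y\<^sub>0 fr) s s' \<and> map s' [y\<^sub>0..<y\<^sub>0 + length gs] = ys
           \<and> (\<forall>r<fr. r \<notin> {y\<^sub>0..<y\<^sub>0 + length gs} \<longrightarrow> s' r = s r)"
  using assms
proof (induction gs arbitrary: ys y\<^sub>0 s)
  case Nil
  then show ?case by (auto intro: exec_skip)
next
  case (Cons g gs)
  from Cons.prems(2) obtain v vs where ys: "ys = v # vs" "rec_eval g xs v"
    "list_all2 (\<lambda>g y. rec_eval g xs y) gs vs" by (cases ys) auto
  have "recf_compiled g" using Cons.prems(1) by simp
  moreover have "set ins \<subseteq> {..<fr}" "y\<^sub>0 < fr" "y\<^sub>0 \<notin> set ins"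
    using Cons.prems(4,5) by auto
  ultimately obtain s\<^sub>1 where s\<^sub>1: "exec (compile_recf g ins y\<^sub>0 fr) s s\<^sub>1" "s\<^sub>1 y\<^sub>0 = v"
    "\<forall>r<fr. r \<noteq> y\<^sub>0 \<longrightarrow> s\<^sub>1 r = s r"
    using recf_compiledD[OF _ ys(2) Cons.prems(3)] by blast
  have "s\<^sub>1 x = s x" if "x \<in> set ins" for x
  proof -
    have "x < y\<^sub>0" using that Cons.prems(4) by auto
    then show ?thesis using s\<^sub>1(3) Cons.prems(5) by simp
  qed
  then have "map s\<^sub>1 ins = xs" using Cons.prems(3) by (auto simp: map_eq_conv)
  then obtain s\<^sub>2 where s\<^sub>2: "exec (compile_recfs gs ins (Suc y\<^sub>0) fr) s\<^sub>1 s\<^sub>2"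
    "map s\<^sub>2 [Suc y\<^sub>0..<Suc y\<^sub>0 + length gs] = vs"
    "\<forall>r<fr. r \<notin> {Suc y\<^sub>0..<Suc y\<^sub>0 + length gs} \<longrightarrow> s\<^sub>2 r = s\<^sub>1 r"
  proof -
    have "\<forall>g\<in>set gs. recf_compiled g" "set ins \<subseteq> {..<Suc y\<^sub>0}" "Suc y\<^sub>0 + length gs \<le> fr"
      using Cons.prems(1,4,5) by auto
    then show ?thesis using Cons.IH[OF _ ys(3) \<open>map s\<^sub>1 ins = xs\<close>] that by blast
  qed
  have "[y\<^sub>0..<y\<^sub>0 + length (g # gs)] = y\<^sub>0 # [Suc y\<^sub>0..<Suc y\<^sub>0 + length gs]"
    by (simp add: upt_conv_Cons del: upt_Suc)
  moreover have "s\<^sub>2 y\<^sub>0 = v" using s\<^sub>2(3) s\<^sub>1(2) Cons.prems(5) by auto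
  ultimately have "map s\<^sub>2 [y\<^sub>0..<y\<^sub>0 + length (g # gs)] = ys"
    using s\<^sub>2(2) ys(1) by simp
  moreover have "exec (compile_recfs (g # gs) ins y\<^sub>0 fr) s s\<^sub>2"
    using s\<^sub>1(1) s\<^sub>2(1) by (auto intro: exec_Seq)
  moreover have "\<forall>r<fr. r \<notin> {y\<^sub>0..<y\<^sub>0 + length (g # gs)} \<longrightarrow> s\<^sub>2 r = s r"
    using s\<^sub>1(3) s\<^sub>2(3) by auto
  ultimately show ?case by blast
qed

lemma recf_compiled_Comp:
  assumes f: "recf_compiled f" and gs: "\<forall>g\<in>set gs. recf_compiled g"
  shows "recf_compiled (Comp f gs)"
proof (rule recf_compiledI)
  fix xs ins :: "nat list" and y out fr :: nat and s :: "nat \<Rightarrow> nat"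
  assume ev: "rec_eval (Comp f gs) xs y" and args: "map s ins = xs" "set ins \<subseteq> {..<fr}"
    and out: "out < fr" "out \<notin> set ins"
  from ev obtain ys where ys: "list_all2 (\<lambda>g y. rec_eval g xs y) gs ys" "rec_eval f ys y"
    by (auto elim: rec_eval.cases)
  let ?fr = "fr + length gs"
  obtain s\<^sub>1 where s\<^sub>1: "exec (compile_recfs gs ins fr ?fr) s s\<^sub>1" "map s\<^sub>1 [fr..<?fr] = ys"
      "\<forall>r<?fr. r \<notin> {fr..<?fr} \<longrightarrow> s\<^sub>1 r = s r"
    using exec_compile_recfs[OF gs ys(1) args order_refl] by auto
  obtain s\<^sub>2 where s\<^sub>2: "exec (compile_recf f [fr..<?fr] out ?fr) s\<^sub>1 s\<^sub>2" "s\<^sub>2 out = y"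
    "\<forall>r<?fr. r \<noteq> out \<longrightarrow> s\<^sub>2 r = s\<^sub>1 r"
  proof -
    have "set [fr..<?fr] \<subseteq> {..<?fr}" "out < ?fr" "out \<notin> set [fr..<?fr]" using out by auto
    then show ?thesis using recf_compiledD[OF f ys(2) s\<^sub>1(2)] that by blast
  qed
  show "\<exists>s'. exec (compile_recf (Comp f gs) ins out fr) s s' \<and> s' out = y \<and>
      (\<forall>r<fr. r \<noteq> out \<longrightarrow> s' r = s r)"
    using s\<^sub>1 s\<^sub>2 by (intro exI[of _ s\<^sub>2]) (auto intro: exec_Seq)
qed

lemma rec_eval_PrimRec_chain:
  "rec_eval (PrimRec f g) (n # xs) z \<Longrightarrow>
   \<exists>Y. Y n = z \<and> rec_eval f xs (Y 0) \<and> (\<forall>j<n. rec_eval g (j # Y j # xs) (Y (Suc j)))"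
proof (induction n arbitrary: z)
  case 0
  then have "rec_eval f xs z" by (auto elim: rec_eval.cases)
  then show ?case by (intro exI[of _ "\<lambda>_. z"]) auto
next
  case (Suc n)
  from Suc.prems obtain y where y: "rec_eval (PrimRec f g) (n # xs) y" "rec_eval g (n # y # xs) z"
    by (auto elim: rec_eval.cases)
  from Suc.IH[OF y(1)] obtain Y where Y: "Y n = y" "rec_eval f xs (Y 0)"
    "\<forall>j<n. rec_eval g (j # Y j # xs) (Y (Suc j))" by blast
  show ?case
    using Y y(2) by (intro exI[of _ "Y(Suc n := z)"]) (auto simp: less_Suc_eq)
qed

lemma exec_primrec_loop:
  assumes g: "recf_compiled g" and chain: "\<forall>j<n. rec_eval g (j # Y j # xs) (Y (Suc j))"
    and args: "set args \<subseteq> {..<fr}"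
  shows "u (fr + 1) = j \<Longrightarrow> u (fr + 2) = k \<Longrightarrow> u fr = Y j \<Longrightarrow> j + k = n \<Longrightarrow> map u args = xs \<Longrightarrow>
    \<exists>u'. exec (primrec_loop (compile_recf g ((fr + 1) # fr # args) (fr + 3) (fr + 5)) fr) u u'
       \<and> u' fr = Y n \<and> (\<forall>r<fr. u' r = u r)"
proof (induction k arbitrary: j u)
  case 0
  then show ?case unfolding primrec_loop_def by (intro exI[of _ u]) (auto intro: exec_While_False)
next
  case (Suc k)
  let ?body = "compile_recf g ((fr + 1) # fr # args) (fr + 3) (fr + 5)"
  have "j < n" using Suc.prems by simp
  then have ev: "rec_eval g (j # Y j # xs) (Y (Suc j))" using chain by blast
  have call: "map u ((fr + 1) # fr # args) = j # Y j # xs" "set ((fr + 1) # fr # args) \<subseteq> {..<fr + 5}"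
    "fr + 3 < fr + 5" "fr + 3 \<notin> set ((fr + 1) # fr # args)"
    using Suc.prems args by auto
  obtain u\<^sub>1 where u\<^sub>1: "exec ?body u u\<^sub>1" "u\<^sub>1 (fr + 3) = Y (Suc j)"
    "\<forall>r<fr + 5. r \<noteq> fr + 3 \<longrightarrow> u\<^sub>1 r = u r"
    using recf_compiledD[OF g ev call] by blast
  define u\<^sub>2 where "u\<^sub>2 = u\<^sub>1(fr := Y (Suc j), fr + 4 := 0, fr + 1 := Suc j, fr + 2 := k)"
  have body: "exec (CSeq ?body (CSeq (copy (fr + 3) fr (fr + 4)) (CSeq (CInc (fr + 1)) (CDec (fr + 2)))))
      u u\<^sub>2"
    using u\<^sub>1 Suc.prems unfolding u\<^sub>2_def
    by (intro exec_Seq[OF u\<^sub>1(1)] exec_Seq[OF exec_copy] exec_Seq[OF exec_Inc]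
        exec_final_cong[OF exec_Dec]) (auto simp: fun_eq_iff)
  have u\<^sub>2: "u\<^sub>2 (fr + 1) = Suc j" "u\<^sub>2 (fr + 2) = k" "u\<^sub>2 fr = Y (Suc j)" "\<forall>r<fr. u\<^sub>2 r = u r"
    using u\<^sub>1(3) by (auto simp: u\<^sub>2_def)
  moreover have "map u\<^sub>2 args = xs"
    using u\<^sub>2(4) args Suc.prems(5) by (auto simp: map_eq_conv subset_iff)
  ultimately obtain u' where u': "exec (primrec_loop ?body fr) u\<^sub>2 u'" "u' fr = Y n"
    "\<forall>r<fr. u' r = u\<^sub>2 r"
    using Suc.IH[of u\<^sub>2 "Suc j"] Suc.prems(4) by auto
  have "exec (primrec_loop ?body fr) u u'"
    using exec_While_True[OF _ body u'(1)[unfolded primrec_loop_def]] Suc.prems(2)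
    unfolding primrec_loop_def by simp
  then show ?case using u' u\<^sub>2(4) by auto
qed

lemma recf_compiled_PrimRec:
  assumes f: "recf_compiled f" and g: "recf_compiled g"
  shows "recf_compiled (PrimRec f g)"
proof (rule recf_compiledI)
  fix xs ins :: "nat list" and y out fr :: nat and s :: "nat \<Rightarrow> nat"
  assume ev: "rec_eval (PrimRec f g) xs y" and args: "map s ins = xs" "set ins \<subseteq> {..<fr}"
    and out: "out < fr" "out \<notin> set ins"
  obtain n xs' where xs: "xs = n # xs'" using ev by (auto elim: rec_eval.cases)
  with args obtain a ins' where ins: "ins = a # ins'" "s a = n" "map s ins' = xs'"
    by (cases ins) auto
  have sub: "set ins' \<subseteq> {..<fr}" "a < fr" using args ins by auto
  from rec_eval_PrimRec_chain[OF ev[unfolded xs]] obtain Y where Y: "Y n = y" "rec_eval f xs' (Y 0)"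
    "\<forall>j<n. rec_eval g (j # Y j # xs') (Y (Suc j))" by blast
  have call: "set ins' \<subseteq> {..<fr + 5}" "fr < fr + 5" "fr \<notin> set ins'" using sub by auto
  obtain s\<^sub>1 where s\<^sub>1: "exec (compile_recf f ins' fr (fr + 5)) s s\<^sub>1" "s\<^sub>1 fr = Y 0"
    "\<forall>r<fr + 5. r \<noteq> fr \<longrightarrow> s\<^sub>1 r = s r"
    using recf_compiledD[OF f Y(2) ins(3) call] by blast
  define s\<^sub>2 where "s\<^sub>2 = s\<^sub>1(fr + 1 := 0, fr + 2 := n, fr + 4 := 0)"
  have copy_n: "exec (copy a (fr + 2) (fr + 4)) (s\<^sub>1(fr + 1 := 0)) s\<^sub>2"
    unfolding s\<^sub>2_def using sub s\<^sub>1(3) ins(2) by (intro exec_final_cong[OF exec_copy]) auto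
  have s\<^sub>2: "s\<^sub>2 (fr + 1) = 0" "s\<^sub>2 (fr + 2) = n" "s\<^sub>2 fr = Y 0" "\<forall>r<fr. s\<^sub>2 r = s r"
    using s\<^sub>1 by (auto simp: s\<^sub>2_def)
  moreover have "map s\<^sub>2 ins' = xs'"
    using s\<^sub>2(4) sub ins(3) by (auto simp: map_eq_conv subset_iff)
  ultimately obtain s\<^sub>3 where s\<^sub>3:
    "exec (primrec_loop (compile_recf g ((fr + 1) # fr # ins') (fr + 3) (fr + 5)) fr) s\<^sub>2 s\<^sub>3"
    "s\<^sub>3 fr = Y n" "\<forall>r<fr. s\<^sub>3 r = s\<^sub>2 r"
    using exec_primrec_loop[OF g Y(3) sub(1), of s\<^sub>2 0 n] by auto
  have "exec (copy fr out (fr + 4)) s\<^sub>3 (s\<^sub>3(out := s\<^sub>3 fr, fr + 4 := 0))"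
    using out by (intro exec_copy) auto
  then have "exec (compile_recf (PrimRec f g) ins out fr) s (s\<^sub>3(out := s\<^sub>3 fr, fr + 4 := 0))"
    unfolding ins compile_recf.simps list.sel
    by (intro exec_Seq[OF s\<^sub>1(1) exec_Seq[OF exec_clear exec_Seq[OF copy_n exec_Seq[OF s\<^sub>3(1)]]]])
  then show "\<exists>s'. exec (compile_recf (PrimRec f g) ins out fr) s s' \<and> s' out = y \<and>
      (\<forall>r<fr. r \<noteq> out \<longrightarrow> s' r = s r)"
    using s\<^sub>3 s\<^sub>2(4) Y(1) out by (intro exI) auto
qed

lemma exec_search_loop:
  assumes f: "recf_compiled f" and ev: "\<forall>m\<le>n. rec_eval f (m # xs) (V m)"
    and nonzero: "\<forall>m<n. V m \<noteq> 0" and zero: "V n = 0" and args: "set ins \<subseteq> {..<fr}"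
  shows "n - j = k \<Longrightarrow> j \<le> n \<Longrightarrow> u fr = j \<Longrightarrow> u (fr + 1) = V j \<Longrightarrow> map u ins = xs \<Longrightarrow>
    \<exists>u'. exec (search_loop (compile_recf f (fr # ins) (fr + 1) (fr + 3)) fr) u u'
       \<and> u' fr = n \<and> (\<forall>r<fr. u' r = u r)"
proof (induction k arbitrary: j u)
  case 0
  then show ?case
    using zero unfolding search_loop_def by (intro exI[of _ u]) (auto intro: exec_While_False)
next
  case (Suc k)
  let ?body = "compile_recf f (fr # ins) (fr + 1) (fr + 3)"
  have "j < n" using Suc.prems by simp
  then have ev_j: "rec_eval f (Suc j # xs) (V (Suc j))" using ev by simp
  have call: "map (u(fr := Suc j)) (fr # ins) = Suc j # xs" "set (fr # ins) \<subseteq> {..<fr + 3}"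
    "fr + 1 < fr + 3" "fr + 1 \<notin> set (fr # ins)"
    using Suc.prems args by (auto simp: map_eq_conv subset_iff)
  obtain u\<^sub>1 where u\<^sub>1: "exec ?body (u(fr := Suc j)) u\<^sub>1" "u\<^sub>1 (fr + 1) = V (Suc j)"
    "\<forall>r<fr + 3. r \<noteq> fr + 1 \<longrightarrow> u\<^sub>1 r = (u(fr := Suc j)) r"
    using recf_compiledD[OF f ev_j call] by blast
  have body: "exec (CSeq (CInc fr) ?body) u u\<^sub>1"
    using u\<^sub>1(1) Suc.prems(3) by (intro exec_Seq[OF exec_Inc]) simp
  have u\<^sub>1_fr: "u\<^sub>1 fr = Suc j" "\<forall>r<fr. u\<^sub>1 r = u r" using u\<^sub>1(3) by auto
  moreover have "map u\<^sub>1 ins = xs"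
    using u\<^sub>1_fr(2) args Suc.prems(5) by (auto simp: map_eq_conv subset_iff)
  moreover have "n - Suc j = k" "Suc j \<le> n" using Suc.prems(1) \<open>j < n\<close> by auto
  ultimately obtain u' where u': "exec (search_loop ?body fr) u\<^sub>1 u'" "u' fr = n" "\<forall>r<fr. u' r = u\<^sub>1 r"
    using Suc.IH u\<^sub>1(2) by blast
  have "u (fr + 1) \<noteq> 0" using Suc.prems nonzero \<open>j < n\<close> by simp
  then have "exec (search_loop ?body fr) u u'"
    using exec_While_True[OF _ body u'(1)[unfolded search_loop_def]]
    unfolding search_loop_def by simp
  then show ?case using u' u\<^sub>1_fr(2) by auto
qed

lemma recf_compiled_Minim:
  assumes f: "recf_compiled f"
  shows "recf_compiled (Minim f)"
proof (rule recf_compiledI)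
  fix xs ins :: "nat list" and n out fr :: nat and s :: "nat \<Rightarrow> nat"
  assume ev: "rec_eval (Minim f) xs n" and args: "map s ins = xs" "set ins \<subseteq> {..<fr}"
    and out: "out < fr" "out \<notin> set ins"
  from ev have ev_n: "rec_eval f (n # xs) 0" and ev_less: "\<forall>m<n. \<exists>y. y \<noteq> 0 \<and> rec_eval f (m # xs) y"
    by (auto elim: rec_eval.cases)
  from ev_less obtain W where W: "\<forall>m<n. W m \<noteq> 0 \<and> rec_eval f (m # xs) (W m)"
    by metis
  define V where "V m = (if m < n then W m else 0)" for m
  have V: "\<forall>m<n. V m \<noteq> 0" "V n = 0" and ev_V: "\<forall>m\<le>n. rec_eval f (m # xs) (V m)"
    using W ev_n by (auto simp: V_def le_less)
  let ?body = "compile_recf f (fr # ins) (fr + 1) (fr + 3)"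
  have call: "map (s(fr := 0)) (fr # ins) = 0 # xs" "set (fr # ins) \<subseteq> {..<fr + 3}"
    "fr + 1 < fr + 3" "fr + 1 \<notin> set (fr # ins)"
    using args by (auto simp: map_eq_conv subset_iff)
  obtain s\<^sub>1 where s\<^sub>1: "exec ?body (s(fr := 0)) s\<^sub>1" "s\<^sub>1 (fr + 1) = V 0"
    "\<forall>r<fr + 3. r \<noteq> fr + 1 \<longrightarrow> s\<^sub>1 r = (s(fr := 0)) r"
    using recf_compiledD[OF f _ call] ev_V by blast
  have s\<^sub>1_fr: "s\<^sub>1 fr = 0" "\<forall>r<fr. s\<^sub>1 r = s r" using s\<^sub>1(3) by auto
  moreover have "map s\<^sub>1 ins = xs"
    using s\<^sub>1_fr(2) args by (auto simp: map_eq_conv subset_iff)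
  ultimately obtain s\<^sub>2 where s\<^sub>2: "exec (search_loop ?body fr) s\<^sub>1 s\<^sub>2" "s\<^sub>2 fr = n"
    "\<forall>r<fr. s\<^sub>2 r = s\<^sub>1 r"
    using exec_search_loop[OF f ev_V V args(2), where j=0 and k=n and u=s\<^sub>1] s\<^sub>1(2) by auto
  have "exec (copy fr out (fr + 2)) s\<^sub>2 (s\<^sub>2(out := s\<^sub>2 fr, fr + 2 := 0))"
    using out by (intro exec_copy) auto
  then have "exec (compile_recf (Minim f) ins out fr) s (s\<^sub>2(out := s\<^sub>2 fr, fr + 2 := 0))"
    unfolding compile_recf.simps
    by (intro exec_Seq[OF exec_clear exec_Seq[OF s\<^sub>1(1) exec_Seq[OF s\<^sub>2(1)]]])
  then show "\<exists>s'. exec (compile_recf (Minim f) ins out fr) s s' \<and> s' out = n \<and>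
      (\<forall>r<fr. r \<noteq> out \<longrightarrow> s' r = s r)"
    using s\<^sub>2 s\<^sub>1_fr out by (intro exI) auto
qed

theorem recf_compiled_all: "recf_compiled f"
proof (induction f)
  case (Comp f gs)
  then show ?case by (intro recf_compiled_Comp) auto
qed (auto intro: recf_compiled_Zf recf_compiled_Sf recf_compiled_Proj
  recf_compiled_PrimRec recf_compiled_Minim)

section \<open>A TSL specification of a counter machine\<close>

definition tsl_imp :: "tsl \<Rightarrow> tsl \<Rightarrow> tsl" where
  "tsl_imp a b = Neg (Conj a (Neg b))"

definition tsl_conjs :: "tsl list \<Rightarrow> tsl" where
  "tsl_conjs l = foldr Conj l TT"

definition tsl_G :: "tsl \<Rightarrow> tsl" where
  "tsl_G f = Neg (Until TT (Neg f))"

definition tsl_F :: "tsl \<Rightarrow> tsl" where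
  "tsl_F f = Until TT f"

lemma sat_tsl_imp [simp]: "sat \<rho> j (tsl_imp a b) \<longleftrightarrow> (sat \<rho> j a \<longrightarrow> sat \<rho> j b)"
  by (simp add: tsl_imp_def)

lemma sat_tsl_conjs [simp]: "sat \<rho> j (tsl_conjs l) \<longleftrightarrow> (\<forall>f\<in>set l. sat \<rho> j f)"
  by (induction l) (auto simp: tsl_conjs_def)

lemma sat_tsl_G [simp]: "sat \<rho> j (tsl_G f) \<longleftrightarrow> (\<forall>k\<ge>j. sat \<rho> k f)"
  by (auto simp: tsl_G_def)

lemma sat_tsl_F [simp]: "sat \<rho> j (tsl_F f) \<longleftrightarrow> (\<exists>k\<ge>j. sat \<rho> k f)"
  by (auto simp: tsl_F_def)

lemma tsl_over_tsl_imp [simp]: "tsl_over R I (tsl_imp a b) \<longleftrightarrow> tsl_over R I a \<and> tsl_over R I b"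
  by (simp add: tsl_imp_def)

lemma tsl_over_tsl_conjs [simp]: "tsl_over R I (tsl_conjs l) \<longleftrightarrow> (\<forall>f\<in>set l. tsl_over R I f)"
  by (induction l) (auto simp: tsl_conjs_def)

lemma tsl_over_tsl_G [simp]: "tsl_over R I (tsl_G f) \<longleftrightarrow> tsl_over R I f"
  by (simp add: tsl_G_def)

lemma tsl_over_tsl_F [simp]: "tsl_over R I (tsl_F f) \<longleftrightarrow> tsl_over R I f"
  by (simp add: tsl_F_def)

text \<open>State variable \<open>0\<close> holds the program counter, state variable \<open>Suc r\<close> holds register \<open>r\<close>.\<close>

definition pc_is :: "nat \<Rightarrow> pf" where
  "pc_is k = PEq (RVar 0) (Cst (int k))"

definition reg_zero :: "nat \<Rightarrow> pf" where
  "reg_zero r = PEq (RVar (Suc r)) (Cst 0)"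

fun update_tm :: "instr \<Rightarrow> bool \<Rightarrow> tm \<Rightarrow> tm" where
  "update_tm (IInc r j) z t = Inc t"
| "update_tm (IDec r j) z t = (if z then t else Dec t)"
| "update_tm (IJz r j\<^sub>1 j\<^sub>2) z t = t"

lemma tm_over_update_tm [simp]: "tm_over R I (update_tm i z t) = tm_over R I t"
  by (cases i) auto

definition new_tm :: "instr \<Rightarrow> bool \<Rightarrow> nat \<Rightarrow> tm" where
  "new_tm i z r = (if r = instr_reg i then update_tm i z (RVar (Suc r)) else RVar (Suc r))"

definition effect :: "nat \<Rightarrow> instr \<Rightarrow> bool \<Rightarrow> tsl" where
  "effect N i z = tsl_conjs
     (Upd 0 (Cst (int (instr_next i z))) # map (\<lambda>r. Upd (Suc r) (new_tm i z r)) [0..<N])"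

definition instr_formula :: "nat \<Rightarrow> instr \<Rightarrow> tsl" where
  "instr_formula N i = Conj (tsl_imp (Atom (reg_zero (instr_reg i))) (effect N i True))
                          (tsl_imp (Neg (Atom (reg_zero (instr_reg i)))) (effect N i False))"

definition step_formula :: "nat \<Rightarrow> instr list \<Rightarrow> nat \<Rightarrow> tsl" where
  "step_formula N P k = tsl_imp (Atom (pc_is k)) (instr_formula N (P ! k))"

definition machine_spec :: "nat \<Rightarrow> instr list \<Rightarrow> tsl" where
  "machine_spec N P = tsl_conjs ([Atom (pc_is 0)] @ map (\<lambda>r. Atom (reg_zero r)) [1..<N] @
     [tsl_G (tsl_conjs (map (step_formula N P) [0..<length P])), tsl_F (Atom (pc_is (length P)))])"

text \<open>The initial content of register \<open>0\<close> is the only part of the formula that depends on the input.\<close>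
definition halting_formula :: "nat \<Rightarrow> instr list \<Rightarrow> nat \<Rightarrow> tsl" where
  "halting_formula N P m = Conj (Atom (PEq (RVar 1) (Cst (int m)))) (machine_spec N P)"

definition input_regs :: "nat \<Rightarrow> nat \<Rightarrow> nat" where
  "input_regs m = (\<lambda>r. if r = 0 then m else 0)"

definition config_val :: "config \<Rightarrow> val" where
  "config_val c = (\<lambda>x. if x = 0 then int (fst c) else int (snd c (x - 1)))"

definition agrees :: "nat \<Rightarrow> val \<Rightarrow> config \<Rightarrow> bool" where
  "agrees N v c \<longleftrightarrow> v 0 = int (fst c) \<and> (\<forall>r<N. v (Suc r) = int (snd c r))"

lemma agrees_config_val: "agrees N (config_val c) c"
  by (simp add: agrees_def config_val_def)

lemma teval_update_tm:
  "v (Suc r) = int x \<Longrightarrow> teval v w (update_tm i (x = 0) (RVar (Suc r))) = int (instr_update i x)"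
  by (cases i) auto

lemma sat_instr_formula_iff:
  assumes wf: "wf_prog N P" and agree: "agrees N (fst (\<rho> j)) c" and pc: "fst c < length P"
  shows "sat \<rho> j (instr_formula N (P ! fst c)) \<longleftrightarrow> agrees N (fst (\<rho> (Suc j))) (step P c)"
proof -
  let ?i = "P ! fst c"
  let ?r = "instr_reg ?i"
  let ?x = "snd c ?r"
  have "?i \<in> set P" using pc by simp
  then have r: "?r < N" using wf unfolding wf_prog_def by blast
  then have "peval (fst (\<rho> j)) (snd (\<rho> j)) (reg_zero ?r) \<longleftrightarrow> ?x = 0"
    using agree unfolding agrees_def reg_zero_def by auto
  then have "sat \<rho> j (instr_formula N ?i) \<longleftrightarrow> sat \<rho> j (effect N ?i (?x = 0))"
    unfolding instr_formula_def by auto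
  moreover have "teval (fst (\<rho> j)) (snd (\<rho> j)) (new_tm ?i (?x = 0) r)
      = int (((snd c)(?r := instr_update ?i ?x)) r)" if "r < N" for r
    using agree that teval_update_tm[of "fst (\<rho> j)" ?r ?x]
    unfolding new_tm_def agrees_def by auto
  ultimately show ?thesis
    using pc unfolding effect_def agrees_def by (auto simp: step_lt Let_def)
qed

lemma sat_halting_formula_imp_halts:
  assumes wf: "wf_prog N P" and spec: "sat \<rho> 0 (halting_formula N P m)"
  shows "halts P (input_regs m)"
proof -
  define c where "c k = (step P ^^ k) (0, input_regs m)" for k
  have start: "agrees N (fst (\<rho> 0)) (c 0)"
    and steps: "\<And>k k'. k' < length P \<Longrightarrow> fst (\<rho> k) 0 = int k' \<Longrightarrow> sat \<rho> k (instr_formula N (P ! k'))"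
    and "\<exists>k. fst (\<rho> k) 0 = int (length P)"
    using spec unfolding halting_formula_def machine_spec_def
    by (auto simp: pc_is_def reg_zero_def step_formula_def agrees_def c_def input_regs_def
      less_Suc_eq_0_disj)
  then obtain k where k: "fst (\<rho> k) 0 = int (length P)" "\<forall>j<k. fst (\<rho> j) 0 \<noteq> int (length P)"
    using exists_least_iff[of "\<lambda>k. fst (\<rho> k) 0 = int (length P)"] by blast
  have "j \<le> k \<Longrightarrow> agrees N (fst (\<rho> j)) (c j)" for j
  proof (induction j)
    case (Suc j)
    then have agree: "agrees N (fst (\<rho> j)) (c j)" by simp
    have "fst (c j) \<le> length P"
      unfolding c_def by (rule funpow_step_pc_le[OF wf]) simp
    moreover have "fst (\<rho> j) 0 = int (fst (c j))" using agree by (simp add: agrees_def)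
    moreover have "fst (\<rho> j) 0 \<noteq> int (length P)" using k(2) Suc.prems by simp
    ultimately have "fst (c j) < length P" by simp
    moreover from this have "sat \<rho> j (instr_formula N (P ! fst (c j)))"
      using steps \<open>fst (\<rho> j) 0 = int (fst (c j))\<close> by blast
    ultimately have "agrees N (fst (\<rho> (Suc j))) (step P (c j))"
      using sat_instr_formula_iff[of N P \<rho> j "c j"] wf agree by blast
    then show ?case by (simp add: c_def)
  qed (simp add: start)
  then have "fst (c k) = length P" using k(1) by (simp add: agrees_def)
  then show ?thesis unfolding halts_def c_def by blast
qed

definition controller_preds :: "nat \<Rightarrow> instr list \<Rightarrow> pf set" where
  "controller_preds N P = pc_is ` {..<length P} \<union> reg_zero ` {..<N}"

definition controller_update :: "nat \<Rightarrow> instr list \<Rightarrow> pf set \<Rightarrow> nat \<Rightarrow> tm" where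
  "controller_update N P S x = (if \<exists>k<length P. pc_is k \<in> S then
     (let k = (SOME k. k < length P \<and> pc_is k \<in> S); i = P ! k; z = (reg_zero (instr_reg i) \<in> S)
      in if x = 0 then Cst (int (instr_next i z)) else new_tm i z (x - 1))
     else RVar x)"

lemma controller_update_step:
  assumes wf: "wf_prog N P" and pc: "fst c \<le> length P"
  shows "(\<lambda>x. teval (config_val c) w
            (controller_update N P {p \<in> controller_preds N P. peval (config_val c) w p} x))
         = config_val (step P c)"
proof -
  let ?S = "{p \<in> controller_preds N P. peval (config_val c) w p}"
  have pc_in_S: "pc_is k \<in> ?S \<longleftrightarrow> k < length P \<and> k = fst c" for k
    by (auto simp: controller_preds_def pc_is_def reg_zero_def config_val_def)
  show ?thesis
  proof (cases "fst c < length P")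
    case True
    let ?i = "P ! fst c"
    let ?r = "instr_reg ?i"
    let ?z = "snd c ?r = 0"
    have some: "(SOME k. k < length P \<and> pc_is k \<in> ?S) = fst c"
      using pc_in_S True by (intro some_equality) auto
    have "?i \<in> set P" using True by simp
    then have "?r < N" using wf unfolding wf_prog_def by blast
    then have zero: "(reg_zero ?r \<in> ?S) = ?z"
      by (auto simp: controller_preds_def reg_zero_def config_val_def pc_is_def)
    have "teval (config_val c) w (update_tm ?i ?z (RVar (Suc ?r))) = int (instr_update ?i (snd c ?r))"
      by (rule teval_update_tm) (simp add: config_val_def)
    then show ?thesis
      using True pc_in_S some zero
      by (auto simp: fun_eq_iff controller_update_def step_lt config_val_def new_tm_def Let_def)
  next
    case False
    then have "\<not> (\<exists>k<length P. pc_is k \<in> ?S)" using pc_in_S by auto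
    then have "controller_update N P ?S x = RVar x" for x
      unfolding controller_update_def by (simp only: if_False)
    then show ?thesis using False by (auto simp: step_ge config_val_def)
  qed
qed

lemma mrun_controller:
  assumes "wf_prog N P"
  shows "snd (mrun 0 (controller_preds N P) (config_val (0, s)) (\<lambda>_ _. 0)
           (\<lambda>_. controller_update N P) ins k) = config_val ((step P ^^ k) (0, s))"
proof (induction k)
  case (Suc k)
  have "fst ((step P ^^ k) (0, s)) \<le> length P" by (rule funpow_step_pc_le[OF assms]) simp
  then show ?case using controller_update_step[OF assms, of _ "ins k"] Suc.IH by (simp add: Let_def)
qed simp

lemma halts_imp_realizable:
  assumes wf: "wf_prog N P" and halts: "halts P (input_regs m)"
  shows "realizable {0..N} {} (halting_formula N P m)"
proof -
  let ?run = "mrun 0 (controller_preds N P) (config_val (0, input_regs m)) (\<lambda>_ _. 0)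
                (\<lambda>_. controller_update N P)"
  have "is_mealy {0..N} {} {0} 0 (controller_preds N P) (config_val (0, input_regs m))
          (\<lambda>_ _. 0) (\<lambda>_. controller_update N P)"
    unfolding is_mealy_def
    by (auto simp: controller_preds_def pc_is_def reg_zero_def controller_update_def Let_def new_tm_def)
  moreover have "sat (\<lambda>k. (snd (?run ins k), ins k)) 0 (halting_formula N P m)" for ins
  proof -
    define \<rho> where "\<rho> k = (snd (?run ins k), ins k)" for k
    define c where "c k = (step P ^^ k) (0, input_regs m)" for k
    have \<rho>: "fst (\<rho> k) = config_val (c k)" for k
      unfolding \<rho>_def c_def using mrun_controller[OF wf] by simp
    have "sat \<rho> k (step_formula N P k')" if "k' < length P" for k k'
    proof -
      have "agrees N (fst (\<rho> (Suc k))) (step P (c k))"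
        using \<rho>[of "Suc k"] agrees_config_val by (simp add: c_def)
      then have "fst (c k) = k' \<Longrightarrow> sat \<rho> k (instr_formula N (P ! k'))"
        using sat_instr_formula_iff[OF wf, of \<rho> k "c k"] \<rho>[of k] agrees_config_val that by auto
      then show ?thesis unfolding step_formula_def using \<rho>[of k] by (simp add: pc_is_def config_val_def)
    qed
    moreover obtain n where "fst (c n) = length P" using halts unfolding halts_def c_def by blast
    ultimately show ?thesis
      unfolding \<rho>_def[symmetric] halting_formula_def machine_spec_def using \<rho>
      by (auto simp: pc_is_def reg_zero_def config_val_def c_def input_regs_def)
  qed
  ultimately show ?thesis unfolding realizable_def realizes_def by blast
qed

lemma realizable_imp_halts:
  assumes "wf_prog N P" "realizable R I (halting_formula N P m)"
  shows "halts P (input_regs m)"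
proof -
  from assms(2) obtain q\<^sub>0 Ps r\<^sub>0 \<delta> \<mu> where "realizes q\<^sub>0 Ps r\<^sub>0 \<delta> \<mu> (halting_formula N P m)"
    unfolding realizable_def by blast
  then have "sat (\<lambda>k. (snd (mrun q\<^sub>0 Ps r\<^sub>0 \<delta> \<mu> (\<lambda>_ _. 0) k), (\<lambda>_ _. 0) k)) 0
      (halting_formula N P m)"
    unfolding realizes_def by blast
  then show ?thesis by (rule sat_halting_formula_imp_halts[OF assms(1)])
qed

lemma tsl_over_halting_formula:
  assumes "wf_prog N P" "1 \<le> N"
  shows "tsl_over {0..N} {} (halting_formula N P m)"
proof -
  have "tsl_over {0..N} {} (step_formula N P k)" if "k < length P" for k
  proof -
    have "instr_reg (P ! k) < N" using assms(1) that unfolding wf_prog_def by auto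
    then show ?thesis
      by (auto simp: step_formula_def instr_formula_def effect_def pc_is_def reg_zero_def new_tm_def)
  qed
  then show ?thesis using assms(2) unfolding halting_formula_def machine_spec_def
    by (auto simp: pc_is_def reg_zero_def)
qed

theorem realizable_halting_formula_iff:
  assumes "wf_prog N P"
  shows "realizable {0..N} {} (halting_formula N P m) \<longleftrightarrow> halts P (input_regs m)"
  using assms halts_imp_realizable realizable_imp_halts by blast

section \<open>Diagonalisation\<close>

fun reg_bound :: "cmd \<Rightarrow> nat" where
  "reg_bound (CInc r) = Suc r"
| "reg_bound (CDec r) = Suc r"
| "reg_bound (CSeq c\<^sub>1 c\<^sub>2) = max (reg_bound c\<^sub>1) (reg_bound c\<^sub>2)"
| "reg_bound (CWhile r c) = max (Suc r) (reg_bound c)"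

lemma instr_reg_compile_less: "i \<in> set (compile c k) \<Longrightarrow> instr_reg i < reg_bound c"
  by (induction c arbitrary: k) (auto simp: less_max_iff_disj)

lemma instr_next_compile_le: "i \<in> set (compile c k) \<Longrightarrow> instr_next i z \<le> k + code_length c"
  by (induction c arbitrary: k) fastforce+

text \<open>The program below keeps its input in register \<open>0\<close>, builds a code in the accumulator
  register \<open>3\<close> using registers \<open>4\<close> to \<open>7\<close> as scratch space, and leaves it in register \<open>1\<close>.\<close>

definition double_input :: cmd where
  "double_input = CSeq (clear 3) (CSeq (add_to 0 3 7) (add_to 0 3 7))"

lemma exec_double_input: "\<exists>s'. exec double_input s s' \<and> s' 3 = 2 * s 0 \<and> s' 0 = s 0"
proof -
  note add = exec_add_to[of 0 3 7, simplified]
  have "exec (add_to 0 3 7) (s(3 := 0)) (s(3 := s 0, 7 := 0))"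
    using add[of "s(3 := 0)"] by simp
  moreover have "exec (add_to 0 3 7) (s(3 := s 0, 7 := 0)) (s(3 := s 0 + s 0, 7 := 0))"
    using add[of "s(3 := s 0, 7 := 0)"] by simp
  ultimately have "exec double_input s (s(3 := s 0 + s 0, 7 := 0))"
    unfolding double_input_def by (intro exec_Seq[OF exec_clear] exec_Seq)
  then show ?thesis by (intro exI) auto
qed

definition cons_const :: "nat \<Rightarrow> cmd" where
  "cons_const k = CSeq (set_const 4 k) (CSeq (pair 4 3 5 6 7) (copy 5 3 7))"

lemma exec_cons_const:
  "\<exists>s'. exec (cons_const k) s s' \<and> s' 3 = prod_encode (k, s 3) \<and> s' 0 = s 0"
proof -
  obtain s\<^sub>1 where s\<^sub>1: "exec (pair 4 3 5 6 7) (s(4 := k)) s\<^sub>1" "s\<^sub>1 5 = prod_encode (k, s 3)"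
    "\<forall>r. r \<notin> {5, 6, 7} \<longrightarrow> s\<^sub>1 r = (s(4 := k)) r"
    using exec_pair[of 4 3 5 6 7 "s(4 := k)"] by auto
  have "exec (cons_const k) s (s\<^sub>1(3 := s\<^sub>1 5, 7 := 0))"
    unfolding cons_const_def by (intro exec_Seq[OF exec_set_const exec_Seq[OF s\<^sub>1(1)]] exec_copy) simp
  then show ?thesis using s\<^sub>1 by (intro exI) auto
qed

primrec cons_consts :: "nat list \<Rightarrow> cmd" where
  "cons_consts [] = skip"
| "cons_consts (k # ks) = CSeq (cons_const k) (cons_consts ks)"

lemma exec_cons_consts:
  "\<exists>s'. exec (cons_consts ks) s s' \<and> s' 3 = fold (\<lambda>k a. prod_encode (k, a)) ks (s 3) \<and> s' 0 = s 0"
proof (induction ks arbitrary: s)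
  case Nil
  show ?case using exec_skip by auto
next
  case (Cons k ks)
  obtain s\<^sub>1 where "exec (cons_const k) s s\<^sub>1" "s\<^sub>1 3 = prod_encode (k, s 3)" "s\<^sub>1 0 = s 0"
    using exec_cons_const by blast
  with Cons.IH[of s\<^sub>1] show ?case by (auto intro: exec_Seq)
qed

definition pair_with_input :: cmd where
  "pair_with_input = CSeq (pair 3 0 5 6 7) (copy 5 3 7)"

lemma exec_pair_with_input: "\<exists>s'. exec pair_with_input s s' \<and> s' 3 = prod_encode (s 3, s 0) \<and> s' 0 = s 0"
proof -
  obtain s\<^sub>1 where s\<^sub>1: "exec (pair 3 0 5 6 7) s s\<^sub>1" "s\<^sub>1 5 = prod_encode (s 3, s 0)"
    "\<forall>r. r \<notin> {5, 6, 7} \<longrightarrow> s\<^sub>1 r = s r"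
    using exec_pair[of 3 0 5 6 7 s] by auto
  have "exec pair_with_input s (s\<^sub>1(3 := s\<^sub>1 5, 7 := 0))"
    unfolding pair_with_input_def by (intro exec_Seq[OF s\<^sub>1(1)] exec_copy) simp
  then show ?thesis using s\<^sub>1 by (intro exI) auto
qed

definition instance_code :: "nat \<Rightarrow> nat \<Rightarrow> nat \<Rightarrow> nat" where
  "instance_code L m e = prod_encode (L, prod_encode (0, prod_encode (5, prod_encode (prod_encode (0,
     prod_encode (1, prod_encode (prod_encode (0, 1), prod_encode (2, 2 * m)))), e))))"

lemma enc_instance_halting_formula:
  "enc_instance Rs [] (halting_formula N P m) = instance_code (list_encode Rs) m (enc_tsl (machine_spec N P))"
  by (simp add: enc_instance_def halting_formula_def instance_code_def int_encode_def sum_encode_def)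

definition instance_prog :: "nat \<Rightarrow> cmd" where
  "instance_prog L = CSeq double_input (CSeq (cons_consts [2, prod_encode (0, 1), 1, 0])
     (CSeq pair_with_input (CSeq (cons_consts [5, 0, L]) (copy 3 1 7))))"

lemma exec_instance_prog: "\<exists>s'. exec (instance_prog L) s s' \<and> s' 1 = instance_code L (s 0) (s 0)"
proof -
  obtain s\<^sub>1 where s\<^sub>1: "exec double_input s s\<^sub>1" "s\<^sub>1 3 = 2 * s 0" "s\<^sub>1 0 = s 0"
    using exec_double_input by blast
  obtain s\<^sub>2 where s\<^sub>2: "exec (cons_consts [2, prod_encode (0, 1), 1, 0]) s\<^sub>1 s\<^sub>2"
    "s\<^sub>2 3 = fold (\<lambda>k a. prod_encode (k, a)) [2, prod_encode (0, 1), 1, 0] (s\<^sub>1 3)" "s\<^sub>2 0 = s\<^sub>1 0"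
    using exec_cons_consts by blast
  obtain s\<^sub>3 where s\<^sub>3: "exec pair_with_input s\<^sub>2 s\<^sub>3" "s\<^sub>3 3 = prod_encode (s\<^sub>2 3, s\<^sub>2 0)"
    using exec_pair_with_input by blast
  obtain s\<^sub>4 where s\<^sub>4: "exec (cons_consts [5, 0, L]) s\<^sub>3 s\<^sub>4"
    "s\<^sub>4 3 = fold (\<lambda>k a. prod_encode (k, a)) [5, 0, L] (s\<^sub>3 3)"
    using exec_cons_consts by blast
  have "exec (instance_prog L) s (s\<^sub>4(1 := s\<^sub>4 3, 7 := 0))"
    unfolding instance_prog_def
    by (intro exec_Seq[OF s\<^sub>1(1) exec_Seq[OF s\<^sub>2(1) exec_Seq[OF s\<^sub>3(1) exec_Seq[OF s\<^sub>4(1)]]]] exec_copy)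
      simp
  then show ?thesis
    using s\<^sub>1 s\<^sub>2 s\<^sub>3 s\<^sub>4 by (intro exI[of _ "s\<^sub>4(1 := s\<^sub>4 3, 7 := 0)"]) (simp add: instance_code_def)
qed

lemma reg_bound_instance_prog: "reg_bound (instance_prog L) \<le> 8"
proof -
  have bump_bound: "reg_bound (bump (replicate k r)) \<le> Suc r" for k r
    by (induction k) (auto simp: skip_def)
  then have cons_const_bound: "reg_bound (cons_const k) \<le> 8" for k
    using bump_bound[of k 4] by (simp add: cons_const_def set_const_def pair_def triangle_loop_def add_to_def copy_def
      clear_def transfer_def skip_def)
  then have "reg_bound (cons_consts ks) \<le> 8" for ks
    by (induction ks) (auto simp: skip_def)
  with cons_const_bound show ?thesis
    by (simp add: instance_prog_def double_input_def pair_with_input_def pair_def triangle_loop_def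
      add_to_def copy_def clear_def transfer_def skip_def)
qed

text \<open>The machine reads the input \<open>x\<close>, computes the code of the instance \<open>halting_formula N P x\<close>
  as it would be if \<open>x\<close> were the code of its own \<open>machine_spec N P\<close>, runs the purported
  decision procedure \<open>f\<close> on it, and halts iff the answer is \<open>0\<close>. The register count \<open>N\<close> is
  fixed before the constant \<open>list_encode [0..<Suc N]\<close> enters the program, which is why
  \<open>reg_bound_instance_prog\<close> holds uniformly in that constant.\<close>

definition diag_regs :: "recf \<Rightarrow> nat" where
  "diag_regs f = max 8 (reg_bound (compile_recf f [1] 2 10))"

definition diag_cmd :: "recf \<Rightarrow> cmd" where
  "diag_cmd f = CSeq (instance_prog (list_encode [0..<Suc (diag_regs f)])) (compile_recf f [1] 2 10)"

definition diag_prog :: "recf \<Rightarrow> instr list" where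
  "diag_prog f = (let n = code_length (diag_cmd f)
     in compile (diag_cmd f) 0 @ [IJz 2 (n + 2) (n + 1), IJz 2 (n + 1) (n + 1)])"

lemma wf_diag_prog: "wf_prog (diag_regs f) (diag_prog f)"
  unfolding wf_prog_def
proof
  fix i assume i: "i \<in> set (diag_prog f)"
  let ?n = "code_length (diag_cmd f)"
  have len: "length (diag_prog f) = ?n + 2" by (simp add: diag_prog_def Let_def)
  have "reg_bound (instance_prog L) \<le> diag_regs f" for L
    using reg_bound_instance_prog[of L] by (simp add: diag_regs_def)
  then have bound: "reg_bound (diag_cmd f) \<le> diag_regs f"
    by (simp add: diag_cmd_def diag_regs_def)
  consider "i \<in> set (compile (diag_cmd f) 0)" | "i = IJz 2 (?n + 2) (?n + 1)" | "i = IJz 2 (?n + 1) (?n + 1)"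
    using i by (auto simp: diag_prog_def Let_def)
  then show "instr_reg i < diag_regs f \<and> (\<forall>z. instr_next i z \<le> length (diag_prog f))"
  proof cases
    case 1
    have "instr_reg i < diag_regs f" using instr_reg_compile_less[OF 1] bound by linarith
    moreover have "instr_next i z \<le> length (diag_prog f)" for z
      using instr_next_compile_le[OF 1, of z] len by simp
    ultimately show ?thesis by blast
  qed (auto simp: len diag_regs_def)
qed

lemma funpow_step_self_loop:
  assumes "P ! l = IJz r l l" "l < length P"
  shows "(step P ^^ n) (l, s) = (l, s)"
  using assms by (induction n) (simp_all add: step_def)

lemma halts_diag_prog_iff:
  assumes ev: "rec_eval f [instance_code (list_encode [0..<Suc (diag_regs f)]) x x] v"
  shows "halts (diag_prog f) (input_regs x) \<longleftrightarrow> v = 0"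
proof -
  let ?P = "diag_prog f" and ?n = "code_length (diag_cmd f)"
  let ?L = "list_encode [0..<Suc (diag_regs f)]"
  have P: "length ?P = ?n + 2" "?P ! ?n = IJz 2 (?n + 2) (?n + 1)" "?P ! (?n + 1) = IJz 2 (?n + 1) (?n + 1)"
    by (simp_all add: diag_prog_def Let_def nth_append)
  obtain s\<^sub>1 where s\<^sub>1: "exec (instance_prog ?L) (input_regs x) s\<^sub>1" "s\<^sub>1 1 = instance_code ?L x x"
    using exec_instance_prog[of ?L "input_regs x"] by (auto simp: input_regs_def)
  have call: "map s\<^sub>1 [1] = [instance_code ?L x x]" "set [1::nat] \<subseteq> {..<10}" "2 < (10::nat)" "2 \<notin> set [1::nat]"
    using s\<^sub>1(2) by auto
  obtain s\<^sub>2 where s\<^sub>2: "exec (compile_recf f [1] 2 10) s\<^sub>1 s\<^sub>2" "s\<^sub>2 2 = v"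
    using recf_compiledD[OF recf_compiled_all ev call] by blast
  have "exec (diag_cmd f) (input_regs x) s\<^sub>2"
    unfolding diag_cmd_def by (rule exec_Seq[OF s\<^sub>1(1) s\<^sub>2(1)])
  moreover have "code_at ?P 0 (diag_cmd f)"
    unfolding code_at_def diag_prog_def Let_def by auto
  ultimately obtain n where n: "(step ?P ^^ n) (0, input_regs x) = (?n, s\<^sub>2)"
    using compile_correct by fastforce
  have "halts ?P (input_regs x) \<longleftrightarrow> (\<exists>k. fst ((step ?P ^^ k) (?n, s\<^sub>2)) = ?n + 2)"
    using halts_iff_halts_from[OF n] P(1) by simp
  also have "\<dots> \<longleftrightarrow> v = 0"
  proof (cases "v = 0")
    case True
    then have "(step ?P ^^ 1) (?n, s\<^sub>2) = (?n + 2, s\<^sub>2)" using P s\<^sub>2(2) by (simp add: step_def fun_upd_idem)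
    with True show ?thesis by (metis fst_conv)
  next
    case False
    then have "step ?P (?n, s\<^sub>2) = (?n + 1, s\<^sub>2)" using P s\<^sub>2(2) by (simp add: step_def fun_upd_idem)
    then have "(step ?P ^^ Suc k) (?n, s\<^sub>2) = (?n + 1, s\<^sub>2)" for k
      unfolding funpow_Suc_right comp_apply using funpow_step_self_loop[OF P(3)] P(1) by simp
    then have "fst ((step ?P ^^ k) (?n, s\<^sub>2)) \<noteq> ?n + 2" for k
      by (cases k) auto
    with False show ?thesis by blast
  qed
  finally show ?thesis .
qed

theorem mainTheorem1:
  shows "\<not> (\<exists>f. \<forall>Rs Is \<phi>. tsl_over (set Rs) (set Is) \<phi> \<longrightarrow>
            rec_eval f [enc_instance Rs Is \<phi>] (if realizable (set Rs) (set Is) \<phi> then 1 else 0))"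
proof
  assume "\<exists>f. \<forall>Rs Is \<phi>. tsl_over (set Rs) (set Is) \<phi> \<longrightarrow>
            rec_eval f [enc_instance Rs Is \<phi>] (if realizable (set Rs) (set Is) \<phi> then 1 else 0)"
  then obtain f where decides: "\<And>Rs Is \<phi>. tsl_over (set Rs) (set Is) \<phi> \<Longrightarrow>
      rec_eval f [enc_instance Rs Is \<phi>] (if realizable (set Rs) (set Is) \<phi> then 1 else 0)"
    by blast
  let ?N = "diag_regs f" and ?P = "diag_prog f"
  define x where "x = enc_tsl (machine_spec ?N ?P)"
  let ?\<phi> = "halting_formula ?N ?P x"
  have sets: "set [0..<Suc ?N] = {0..?N}" "set [] = {}" by auto
  have "tsl_over (set [0..<Suc ?N]) (set []) ?\<phi>"
    unfolding sets by (rule tsl_over_halting_formula[OF wf_diag_prog]) (simp add: diag_regs_def)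
  from decides[OF this] have "rec_eval f [instance_code (list_encode [0..<Suc ?N]) x x]
      (if realizable {0..?N} {} ?\<phi> then 1 else 0)"
    unfolding sets enc_instance_halting_formula x_def .
  then have "halts ?P (input_regs x) \<longleftrightarrow> \<not> realizable {0..?N} {} ?\<phi>"
    using halts_diag_prog_iff by fastforce
  then show False
    using realizable_halting_formula_iff[OF wf_diag_prog] by blast
qed

end
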